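(* For $i\in\{1,\dots,m\}$ let $X_i\sim\operatorname{Ber}(p_i,s_i)$ with $p_i\in[0,1)$, $s_i>0$, and let $P_i\sim\operatorname{Poi}\!\left(\ln\frac{1}{1-p_i},\bar s_i\right)$ with $\bar s_i\ge s_i$, all these $2m$ variables being independent. Let $B=\sum_{i=1}^m X_i$ and $P=\sum_{i=1}^m P_i$. Then $\mathbb{P}(B>1)\le\mathbb{P}(P>1)$.
   Context: For $s>0$: $X\sim\operatorname{Ber}(p,s)$ means $X=sZ$ with $Z\sim\operatorname{Ber}(p)$ (Bernoulli), and $P\sim\operatorname{Poi}(\lambda,s)$ means $P=sZ$ with $Z\sim\operatorname{Poi}(\lambda)$ (Poisson with mean $\lambda$). *)

theory Defs
  imports "HOL-Probability.Probability"
begin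

definition poisson_measure :: "real \<Rightarrow> nat measure" where
  "poisson_measure lam =
     density (count_space UNIV) (\<lambda>k. ennreal (lam ^ k / fact k * exp (- lam)))"

definition scaled_poisson :: "real \<Rightarrow> real \<Rightarrow> real measure" where
  "scaled_poisson lam s = distr (poisson_measure lam) borel (\<lambda>k. s * real k)"

definition scaled_bernoulli :: "real \<Rightarrow> real \<Rightarrow> real measure" where
  "scaled_bernoulli p s = distr (measure_pmf (bernoulli_pmf p)) borel (\<lambda>b. s * (if b then 1 else 0))"

end

theory Submission
  imports Defs
begin

text \<open>A coupling through the indicators of positivity. Pointwise \<open>X\<^sub>i \<le> s\<^sub>i \<cdot> [X\<^sub>i > 0]\<close>, and,
  since \<open>P\<^sub>i\<close> takes values in \<open>{0, s\<^sub>i', 2s\<^sub>i', \<dots>}\<close> with \<open>s\<^sub>i' \<ge> s\<^sub>i\<close>, also \<open>s\<^sub>i \<cdot> [P\<^sub>i > 0] \<le> P\<^sub>i\<close>.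
  Both indicators are Bernoulli(\<open>p\<^sub>i\<close>), because \<open>\<P>(P\<^sub>i = 0) = exp (- ln (1 / (1 - p\<^sub>i))) = 1 - p\<^sub>i\<close>;
  by independence the two indicator vectors then have the same joint law, so
  \<open>\<P>(B > 1) \<le> \<P>(\<Sum> s\<^sub>i [X\<^sub>i > 0] > 1) = \<P>(\<Sum> s\<^sub>i [P\<^sub>i > 0] > 1) \<le> \<P>(P > 1)\<close>.\<close>

lemma (in prob_space) indep_sets_reindex:
  assumes "inj_on f I" "indep_sets F (f ` I)"
  shows "indep_sets (\<lambda>i. F (f i)) I"
  unfolding indep_sets_def
proof (intro conjI ballI allI impI)
  fix i assume "i \<in> I"
  then show "F (f i) \<subseteq> events"
    using assms(2) by (auto simp: indep_sets_def)
next
  fix J A assume J: "J \<subseteq> I" "J \<noteq> {}" "finite J" and A: "A \<in> Pi J (\<lambda>i. F (f i))"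
  define A' where "A' = (\<lambda>j. A (the_inv_into J f j))"
  have inj: "inj_on f J"
    using assms(1) J(1) inj_on_subset by blast
  have A'f: "\<And>i. i \<in> J \<Longrightarrow> A' (f i) = A i"
    using inj by (simp add: A'_def the_inv_into_f_f)
  have "A' \<in> Pi (f ` J) F"
    using A A'f by auto
  moreover have "f ` J \<subseteq> f ` I" "f ` J \<noteq> {}" "finite (f ` J)"
    using J by auto
  ultimately have "prob (\<Inter>j\<in>f ` J. A' j) = (\<Prod>j\<in>f ` J. prob (A' j))"
    using assms(2) unfolding indep_sets_def by blast
  moreover have "(\<Inter>j\<in>f ` J. A' j) = (\<Inter>j\<in>J. A j)"
    using A'f by auto
  moreover have "(\<Prod>j\<in>f ` J. prob (A' j)) = (\<Prod>j\<in>J. prob (A j))"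
    using inj A'f by (simp add: prod.reindex)
  ultimately show "prob (\<Inter>j\<in>J. A j) = (\<Prod>j\<in>J. prob (A j))"
    by simp
qed

lemma (in prob_space) indep_vars_reindex:
  assumes "inj_on f I" "indep_vars M' X (f ` I)"
  shows "indep_vars (\<lambda>i. M' (f i)) (\<lambda>i. X (f i)) I"
  using assms indep_sets_reindex[OF assms(1), of "\<lambda>i. {X i -` A \<inter> space M | A. A \<in> sets (M' i)}"]
  unfolding indep_vars_def2 by auto

lemma (in prob_space)
  assumes "indep_vars M' (case_sum X Y) (I <+> J)"
  shows indep_vars_Inl: "indep_vars (\<lambda>i. M' (Inl i)) X I"
    and indep_vars_Inr: "indep_vars (\<lambda>j. M' (Inr j)) Y J"
proof -
  have "indep_vars M' (case_sum X Y) (Inl ` I)" "indep_vars M' (case_sum X Y) (Inr ` J)"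
    by (auto intro: indep_vars_subset[OF assms])
  then show "indep_vars (\<lambda>i. M' (Inl i)) X I" "indep_vars (\<lambda>j. M' (Inr j)) Y J"
    using indep_vars_reindex[of Inl I M' "case_sum X Y"] indep_vars_reindex[of Inr J M' "case_sum X Y"]
    by auto
qed

lemma (in prob_space) prob_eq_if_indep_vars_same_distr:
  assumes Y: "indep_vars N Y I" and Z: "indep_vars N Z I"
    and same_distr: "\<And>i. i \<in> I \<Longrightarrow> distr M (N i) (Y i) = distr M (N i) (Z i)"
    and f: "Measurable.pred (Pi\<^sub>M I N) f"
  shows "prob {\<omega> \<in> space M. f (\<lambda>i\<in>I. Y i \<omega>)} = prob {\<omega> \<in> space M. f (\<lambda>i\<in>I. Z i \<omega>)}"
proof (cases "I = {}")
  case False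
  have Ym: "(\<lambda>\<omega>. \<lambda>i\<in>I. Y i \<omega>) \<in> measurable M (Pi\<^sub>M I N)"
    and Zm: "(\<lambda>\<omega>. \<lambda>i\<in>I. Z i \<omega>) \<in> measurable M (Pi\<^sub>M I N)"
    using Y Z unfolding indep_vars_def by (auto intro!: measurable_restrict)
  have distr_restrict: "distr M (Pi\<^sub>M I N) (\<lambda>\<omega>. \<lambda>i\<in>I. W i \<omega>) = (\<Pi>\<^sub>M i\<in>I. distr M (N i) (W i))"
    if "indep_vars N W I" for W
    using that False by (subst indep_vars_iff_distr_eq_PiM'[symmetric]) (auto simp: indep_vars_def)
  have "distr M (Pi\<^sub>M I N) (\<lambda>\<omega>. \<lambda>i\<in>I. Y i \<omega>) = distr M (Pi\<^sub>M I N) (\<lambda>\<omega>. \<lambda>i\<in>I. Z i \<omega>)"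
    unfolding distr_restrict[OF Y] distr_restrict[OF Z] using same_distr by (intro PiM_cong) auto
  then have "measure (distr M (Pi\<^sub>M I N) (\<lambda>\<omega>. \<lambda>i\<in>I. Y i \<omega>)) {g \<in> space (Pi\<^sub>M I N). f g}
      = measure (distr M (Pi\<^sub>M I N) (\<lambda>\<omega>. \<lambda>i\<in>I. Z i \<omega>)) {g \<in> space (Pi\<^sub>M I N). f g}"
    by simp
  moreover have "{\<omega> \<in> space M. f (\<lambda>i\<in>I. W i \<omega>)}
      = (\<lambda>\<omega>. \<lambda>i\<in>I. W i \<omega>) -` {g \<in> space (Pi\<^sub>M I N). f g} \<inter> space M"
    if "(\<lambda>\<omega>. \<lambda>i\<in>I. W i \<omega>) \<in> measurable M (Pi\<^sub>M I N)" for W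
    using measurable_space[OF that] by auto
  ultimately show ?thesis
    using Ym Zm f by (simp add: measure_distr pred_def)
qed (simp add: restrict_def)

lemma (in prob_space) distr_bool_eqI:
  fixes B C :: "'a \<Rightarrow> bool"
  assumes B: "random_variable (count_space UNIV) B" and C: "random_variable (count_space UNIV) C"
    and eq: "prob {\<omega> \<in> space M. \<not> B \<omega>} = prob {\<omega> \<in> space M. \<not> C \<omega>}"
  shows "distr M (count_space UNIV) B = distr M (count_space UNIV) C"
proof (rule measure_eqI_finite[where A = UNIV])
  have compl: "prob {\<omega> \<in> space M. W \<omega>} = 1 - prob {\<omega> \<in> space M. \<not> W \<omega>}"
    if "random_variable (count_space UNIV) W" for W :: "'a \<Rightarrow> bool"
  proof -
    have "{\<omega> \<in> space M. \<not> W \<omega>} \<in> events"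
      using that by measurable
    moreover have "{\<omega> \<in> space M. W \<omega>} = space M - {\<omega> \<in> space M. \<not> W \<omega>}"
      by auto
    ultimately show ?thesis
      using prob_compl by simp
  qed
  have "prob {\<omega> \<in> space M. B \<omega> = a} = prob {\<omega> \<in> space M. C \<omega> = a}" for a
    using eq compl[OF B] compl[OF C] by (cases a) simp_all
  moreover have "B -` {a} \<inter> space M = {\<omega> \<in> space M. B \<omega> = a}" "C -` {a} \<inter> space M = {\<omega> \<in> space M. C \<omega> = a}" for a
    by auto
  ultimately show "emeasure (distr M (count_space UNIV) B) {a} = emeasure (distr M (count_space UNIV) C) {a}" for a
    using B C by (simp add: emeasure_distr emeasure_eq_measure)
qed simp_all

lemma measure_scaled_bernoulli_nonpos:
  assumes "0 < s" "0 \<le> p" "p \<le> 1"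
  shows "measure (scaled_bernoulli p s) {..0} = 1 - p"
proof -
  have "(\<lambda>b. s * (if b then 1 else 0)) -` {..0} = {False}"
    using assms(1) by auto
  then show ?thesis
    using assms(2,3) by (simp add: scaled_bernoulli_def measure_distr measure_pmf_single)
qed

lemma measure_scaled_poisson_nonpos:
  assumes "0 < s"
  shows "measure (scaled_poisson lam s) {..0} = exp (- lam)"
proof -
  have "(\<lambda>k. s * real k) -` {..0} \<inter> space (poisson_measure lam) = {0}"
    using assms by (auto simp: poisson_measure_def mult_le_0_iff)
  then have "measure (scaled_poisson lam s) {..0} = measure (poisson_measure lam) {0}"
    unfolding scaled_poisson_def by (subst measure_distr) (auto simp: poisson_measure_def)
  then show ?thesis
    by (simp add: poisson_measure_def measure_def emeasure_density)
qed

lemma (in prob_space) distr_pos_scaled_bernoulli_eq_scaled_poisson: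
  assumes X: "X \<in> borel_measurable M" and Y: "Y \<in> borel_measurable M"
    and X_distr: "distr M borel X = scaled_bernoulli p s"
    and Y_distr: "distr M borel Y = scaled_poisson (ln (1 / (1 - p))) t"
    and p: "0 \<le> p" "p < 1" and "0 < s" "0 < t"
  shows "distr M (count_space UNIV) (\<lambda>\<omega>. 0 < X \<omega>) = distr M (count_space UNIV) (\<lambda>\<omega>. 0 < Y \<omega>)"
proof (rule distr_bool_eqI)
  have nonpos: "prob {\<omega> \<in> space M. \<not> 0 < W \<omega>} = measure (distr M borel W) {..0}"
    if "W \<in> borel_measurable M" for W :: "'a \<Rightarrow> real"
    using that by (subst measure_distr) (auto simp: vimage_def not_less Int_def conj_commute)
  have "exp (- ln (1 / (1 - p))) = 1 - p"
    using p by (simp add: ln_div)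
  then show "prob {\<omega> \<in> space M. \<not> 0 < X \<omega>} = prob {\<omega> \<in> space M. \<not> 0 < Y \<omega>}"
    using assms by (simp add: nonpos measure_scaled_bernoulli_nonpos measure_scaled_poisson_nonpos)
qed (use X Y in measurable)

lemma AE_le_of_distr_scaled_bernoulli:
  assumes "X \<in> borel_measurable M" "distr M borel X = scaled_bernoulli p s" "0 < s"
  shows "AE \<omega> in M. X \<omega> \<le> (if 0 < X \<omega> then s else 0)"
proof -
  have "AE x in distr M borel X. x \<le> (if 0 < x then s else 0)"
    unfolding assms(2) scaled_bernoulli_def using assms(3) by (subst AE_distr_iff) auto
  then show ?thesis
    using assms(1) by (subst (asm) AE_distr_iff) auto
qed

lemma AE_ge_of_distr_scaled_poisson:
  assumes "Y \<in> borel_measurable M" "distr M borel Y = scaled_poisson lam t" "0 \<le> s" "s \<le> t"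
  shows "AE \<omega> in M. (if 0 < Y \<omega> then s else 0) \<le> Y \<omega>"
proof -
  have "(if 0 < t * real k then s else 0) \<le> t * real k" for k :: nat
    using assms(3,4) mult_left_mono[of 1 "real k" t] by (cases "k = 0") auto
  then have "AE x in distr M borel Y. (if 0 < x then s else 0) \<le> x"
    unfolding assms(2) scaled_poisson_def by (subst AE_distr_iff) (auto simp: poisson_measure_def)
  then show ?thesis
    using assms(1) by (subst (asm) AE_distr_iff) auto
qed

lemma (in prob_space) prob_sum_less_mono_AE:
  fixes f g :: "'i \<Rightarrow> 'a \<Rightarrow> real"
  assumes "finite I" and le: "\<And>i. i \<in> I \<Longrightarrow> AE \<omega> in M. f i \<omega> \<le> g i \<omega>"
    and g: "\<And>i. i \<in> I \<Longrightarrow> g i \<in> borel_measurable M"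
  shows "prob {\<omega> \<in> space M. c < (\<Sum>i\<in>I. f i \<omega>)} \<le> prob {\<omega> \<in> space M. c < (\<Sum>i\<in>I. g i \<omega>)}"
proof (rule finite_measure_mono_AE)
  have "AE \<omega> in M. \<forall>i\<in>I. f i \<omega> \<le> g i \<omega>"
    using \<open>finite I\<close> le by (rule AE_finite_allI)
  then show "AE \<omega> in M. \<omega> \<in> {\<omega> \<in> space M. c < (\<Sum>i\<in>I. f i \<omega>)} \<longrightarrow> \<omega> \<in> {\<omega> \<in> space M. c < (\<Sum>i\<in>I. g i \<omega>)}"
    by (rule eventually_mono) (auto intro: less_le_trans sum_mono)
  show "{\<omega> \<in> space M. c < (\<Sum>i\<in>I. g i \<omega>)} \<in> events"
    using g by measurable
qed

lemma (in prob_space) prob_sum_pos_weights_eq: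
  fixes X Y :: "'i \<Rightarrow> 'a \<Rightarrow> real" and w :: "'i \<Rightarrow> real"
  assumes X: "indep_vars (\<lambda>_. borel) X I" and Y: "indep_vars (\<lambda>_. borel) Y I"
    and same_distr: "\<And>i. i \<in> I \<Longrightarrow>
      distr M (count_space UNIV) (\<lambda>\<omega>. 0 < X i \<omega>) = distr M (count_space UNIV) (\<lambda>\<omega>. 0 < Y i \<omega>)"
  shows "prob {\<omega> \<in> space M. c < (\<Sum>i\<in>I. if 0 < X i \<omega> then w i else 0)}
    = prob {\<omega> \<in> space M. c < (\<Sum>i\<in>I. if 0 < Y i \<omega> then w i else 0)}"
proof -
  have pos: "indep_vars (\<lambda>_. count_space UNIV) (\<lambda>i \<omega>. 0 < W i \<omega>) I"
    if "indep_vars (\<lambda>_. borel) W I" for W :: "'i \<Rightarrow> 'a \<Rightarrow> real"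
    using indep_vars_compose2[OF that, where Y = "\<lambda>_ x. 0 < x"] by simp
  have [measurable]: "(\<lambda>g. \<Sum>i\<in>I. if g i then w i else 0) \<in> borel_measurable (\<Pi>\<^sub>M i\<in>I. count_space UNIV)"
    by (intro borel_measurable_sum) simp
  have "prob {\<omega> \<in> space M. c < (\<Sum>i\<in>I. if (\<lambda>i\<in>I. 0 < X i \<omega>) i then w i else 0)}
      = prob {\<omega> \<in> space M. c < (\<Sum>i\<in>I. if (\<lambda>i\<in>I. 0 < Y i \<omega>) i then w i else 0)}"
    by (rule prob_eq_if_indep_vars_same_distr[OF pos[OF X] pos[OF Y] same_distr,
          of "\<lambda>g. c < (\<Sum>i\<in>I. if g i then w i else 0)"]) measurable
  then show ?thesis
    by simp
qed

theorem lemma3: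
  fixes M :: "'a measure" and m :: nat
    and p s sbar :: "nat \<Rightarrow> real"
    and X Pv :: "nat \<Rightarrow> 'a \<Rightarrow> real"
  assumes "prob_space M"
    and p_range: "\<And>i. i \<in> {1..m} \<Longrightarrow> 0 \<le> p i \<and> p i < 1"
    and s_pos: "\<And>i. i \<in> {1..m} \<Longrightarrow> s i > 0"
    and sbar_ge: "\<And>i. i \<in> {1..m} \<Longrightarrow> sbar i \<ge> s i"
    and X_distr: "\<And>i. i \<in> {1..m} \<Longrightarrow> distr M borel (X i) = scaled_bernoulli (p i) (s i)"
    and P_distr: "\<And>i. i \<in> {1..m} \<Longrightarrow>
        distr M borel (Pv i) = scaled_poisson (ln (1 / (1 - p i))) (sbar i)"
    and indep: "prob_space.indep_vars M (\<lambda>_. borel)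
        (\<lambda>k. case k of Inl i \<Rightarrow> X i | Inr i \<Rightarrow> Pv i) ({1..m} <+> {1..m})"
  shows "measure M {\<omega> \<in> space M. (\<Sum>i=1..m. X i \<omega>) > 1}
           \<le> measure M {\<omega> \<in> space M. (\<Sum>i=1..m. Pv i \<omega>) > 1}"
proof -
  interpret prob_space M by fact
  have indX: "indep_vars (\<lambda>_. borel) X {1..m}" and indP: "indep_vars (\<lambda>_. borel) Pv {1..m}"
    using indep_vars_Inl[OF indep] indep_vars_Inr[OF indep] by simp_all
  then have Xm: "\<And>i. i \<in> {1..m} \<Longrightarrow> X i \<in> borel_measurable M"
    and Pm: "\<And>i. i \<in> {1..m} \<Longrightarrow> Pv i \<in> borel_measurable M"
    unfolding indep_vars_def by auto
  have sbar_pos: "\<And>i. i \<in> {1..m} \<Longrightarrow> 0 < sbar i"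
    using s_pos sbar_ge by (meson less_le_trans)
  have "prob {\<omega> \<in> space M. 1 < (\<Sum>i=1..m. X i \<omega>)}
      \<le> prob {\<omega> \<in> space M. 1 < (\<Sum>i=1..m. if 0 < X i \<omega> then s i else 0)}"
    using Xm X_distr s_pos by (intro prob_sum_less_mono_AE AE_le_of_distr_scaled_bernoulli) auto
  also have "\<dots> = prob {\<omega> \<in> space M. 1 < (\<Sum>i=1..m. if 0 < Pv i \<omega> then s i else 0)}"
    using Xm Pm X_distr P_distr p_range s_pos sbar_pos
    by (intro prob_sum_pos_weights_eq[OF indX indP] distr_pos_scaled_bernoulli_eq_scaled_poisson) auto
  also have "\<dots> \<le> prob {\<omega> \<in> space M. 1 < (\<Sum>i=1..m. Pv i \<omega>)}"
    using Pm P_distr s_pos sbar_ge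
    by (intro prob_sum_less_mono_AE AE_ge_of_distr_scaled_poisson) (auto intro: less_imp_le)
  finally show ?thesis .
qed

end
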